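(* Let $f:[0,1]\to[0,1]$ be a continuous map with a unique fixed point $a$, and let $P$ be a (non-fixed) periodic orbit of $f$ with over-rotation pair $(p,q)$ and code $L$. If there exist $u,v\in P$, $u\ne v$, with $u>_a v$ and $L(u)=L(v)$, then $p$ and $q$ are not coprime.
   Context: For a continuous interval map $f$ and a periodic orbit $P$ of period $q$ which is not a fixed point, let $2p$ be the number of points $x\in P$ such that $f(x)-x$ and $f^2(x)-f(x)$ have different signs; the over-rotation pair of $P$ is $(p,q)$ and its over-rotation number is $\rho(P)=p/q$. Write $x>_a y$ if $x<y<a$ or $x>y>a$. Code: let $\rho=\rho(P)$ and $\varphi:P\to\{0,1\}$, $\varphi(y)=1$ if $y>a$ and $f(y)<a$, $\varphi(y)=0$ otherwise. The code of $P$ is $L:P\to\mathbb{R}$ with $L(x_0)=0$ for the leftmost point $x_0$ of $P$ and $L(f(y))=L(y)+\rho-\varphi(y)$ for $y\in P$. *)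

theory Defs
  imports "HOL-Analysis.Analysis"
begin

definition periodic_pt :: "(real \<Rightarrow> real) \<Rightarrow> real \<Rightarrow> nat \<Rightarrow> bool" where
  "periodic_pt f x q \<longleftrightarrow> q > 0 \<and> (f ^^ q) x = x \<and> (\<forall>k. 0 < k \<and> k < q \<longrightarrow> (f ^^ k) x \<noteq> x)"

definition orbit :: "(real \<Rightarrow> real) \<Rightarrow> real \<Rightarrow> real set" where
  "orbit f x = {(f ^^ n) x | n. True}"

definition sign_changes :: "(real \<Rightarrow> real) \<Rightarrow> real set \<Rightarrow> nat" where
  "sign_changes f P = card {x \<in> P. (f x - x) * (f (f x) - f x) < 0}"

definition over_rotation_pair :: "(real \<Rightarrow> real) \<Rightarrow> real set \<Rightarrow> nat \<times> nat" where
  "over_rotation_pair f P = (sign_changes f P div 2, card P)"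

definition over_rotation_number :: "(real \<Rightarrow> real) \<Rightarrow> real set \<Rightarrow> real" where
  "over_rotation_number f P = real (fst (over_rotation_pair f P)) / real (snd (over_rotation_pair f P))"

definition gt_at :: "real \<Rightarrow> real \<Rightarrow> real \<Rightarrow> bool" where
  "gt_at a x y \<longleftrightarrow> (x < y \<and> y < a) \<or> (x > y \<and> y > a)"

definition phi :: "(real \<Rightarrow> real) \<Rightarrow> real \<Rightarrow> real \<Rightarrow> real" where
  "phi f a y = (if y > a \<and> f y < a then 1 else 0)"

definition is_code :: "(real \<Rightarrow> real) \<Rightarrow> real \<Rightarrow> real set \<Rightarrow> (real \<Rightarrow> real) \<Rightarrow> bool" where
  "is_code f a P L \<longleftrightarrow> L (Min P) = 0 \<and>
     (\<forall>y \<in> P. L (f y) = L y + over_rotation_number f P - phi f a y)"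

end

theory Submission
  imports Defs
begin

text \<open>Along the orbit the code increases by the over-rotation number and drops by an integer
  at each step, so the code of the \<open>n\<close>-th iterate of the leftmost point is \<open>n p / q\<close> modulo
  the integers. For coprime \<open>p\<close> and \<open>q\<close> the residues \<open>n p / q\<close>, \<open>0 \<le> n < q\<close>, are pairwise
  distinct modulo the integers, hence the code is injective on the orbit.\<close>

lemma funpow_mem_orbit: "(f ^^ n) x \<in> orbit f x"
  unfolding orbit_def by blast

lemma image_orbit_subset: "f ` orbit f x \<subseteq> orbit f x"
proof
  fix z assume "z \<in> f ` orbit f x"
  then obtain n where "z = f ((f ^^ n) x)" unfolding orbit_def by blast
  then show "z \<in> orbit f x" using funpow_mem_orbit[of "Suc n" f x] by simp
qed

lemma orbit_subset_orbit:
  assumes "y \<in> orbit f x"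
  shows "orbit f y \<subseteq> orbit f x"
proof
  fix z assume "z \<in> orbit f y"
  then obtain m n where "y = (f ^^ m) x" "z = (f ^^ n) y"
    using assms unfolding orbit_def by blast
  then have "z = (f ^^ (n + m)) x" by (simp add: funpow_add)
  then show "z \<in> orbit f x" using funpow_mem_orbit by metis
qed

lemma periodic_orbit_subset_image:
  assumes "(f ^^ q) x = x" "q > 0"
  shows "orbit f x \<subseteq> (\<lambda>n. (f ^^ n) x) ` {..<q}"
proof
  fix y assume "y \<in> orbit f x"
  then obtain n where "y = (f ^^ n) x" unfolding orbit_def by blast
  then have "y = (f ^^ (n mod q)) x" using funpow_mod_eq[of q f x n] assms(1) by simp
  then show "y \<in> (\<lambda>n. (f ^^ n) x) ` {..<q}" using assms(2) by auto
qed

lemma periodic_orbit_funpow: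
  assumes "(f ^^ q) x = x" "y \<in> orbit f x"
  shows "(f ^^ q) y = y"
proof -
  obtain n where y: "y = (f ^^ n) x" using assms(2) unfolding orbit_def by blast
  have "(f ^^ q) y = (f ^^ (q + n)) x" by (simp add: y funpow_add)
  also have "\<dots> = (f ^^ (n + q)) x" by (simp only: add.commute)
  also have "\<dots> = y" by (simp add: y funpow_add assms(1))
  finally show ?thesis .
qed

lemma periodic_orbit_mem_sym:
  assumes "(f ^^ q) x = x" "q > 0" "y \<in> orbit f x"
  shows "x \<in> orbit f y"
proof -
  obtain m where y: "y = (f ^^ m) x" using assms(3) unfolding orbit_def by blast
  have "(f ^^ (q * m)) x = x" using funpow_mod_eq[of q f x "q * m"] assms(1) by simp
  moreover have "q * m = (q * m - m) + m" using assms(2) by (cases q) auto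
  ultimately have "x = (f ^^ (q * m - m + m)) x" by simp
  then have "x = (f ^^ (q * m - m)) y" by (simp only: y funpow_add comp_apply)
  then show ?thesis using funpow_mem_orbit[of "q * m - m" f y] by simp
qed

lemma periodic_orbit_funpow_index:
  assumes "(f ^^ q) x = x" "q > 0" "x0 \<in> orbit f x" "y \<in> orbit f x"
  shows "\<exists>n<q. y = (f ^^ n) x0"
proof -
  have "x \<in> orbit f x0" using periodic_orbit_mem_sym assms(1-3) .
  then have "y \<in> orbit f x0" using orbit_subset_orbit assms(4) by blast
  moreover have "(f ^^ q) x0 = x0" using periodic_orbit_funpow assms(1,3) .
  ultimately show ?thesis using periodic_orbit_subset_image[of q f x0] assms(2) by blast
qed

lemma code_funpow:
  assumes code: "is_code f a P L" and closed: "f ` P \<subseteq> P" and "y \<in> P"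
  shows "\<exists>k::int. L ((f ^^ n) y) = L y + real n * over_rotation_number f P - of_int k"
proof (induction n)
  case 0
  show ?case by (intro exI[of _ 0]) simp
next
  case (Suc n)
  then obtain k :: int
    where k: "L ((f ^^ n) y) = L y + real n * over_rotation_number f P - of_int k" by blast
  let ?z = "(f ^^ n) y"
  have "?z \<in> P" using closed \<open>y \<in> P\<close> by (induction n) auto
  then have "L ((f ^^ Suc n) y) = L ?z + over_rotation_number f P - phi f a ?z"
    using code unfolding is_code_def by simp
  also have "\<dots> = L y + real (Suc n) * over_rotation_number f P
      - of_int (k + (if ?z > a \<and> f ?z < a then 1 else 0))"
    using k unfolding phi_def by (simp add: algebra_simps)
  finally show ?case by blast
qed

lemma coprime_multiples_distinct_mod_int:
  fixes k1 k2 :: int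
  assumes "coprime p q" "i < q" "j < q"
    and eq: "real i * (real p / real q) - of_int k1 = real j * (real p / real q) - of_int k2"
  shows "i = j"
proof -
  have "q > 0" using assms(2) by simp
  then have "real i * real p - real q * of_int k1 = real j * real p - real q * of_int k2"
    using eq by (simp add: field_simps)
  then have "real_of_int ((int i - int j) * int p) = real_of_int (int q * (k1 - k2))"
    by (simp add: algebra_simps)
  then have "(int i - int j) * int p = int q * (k1 - k2)"
    by (simp only: of_int_eq_iff)
  then have "int q dvd (int i - int j) * int p" by simp
  moreover have "coprime (int q) (int p)" using assms(1) by (simp add: coprime_commute)
  ultimately have "int q dvd int i - int j" using coprime_dvd_mult_left_iff by blast
  moreover have "\<bar>int i - int j\<bar> < int q" using assms(2,3) by linarith
  ultimately have "int i - int j = 0"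
    using dvd_imp_le_int[of "int i - int j" "int q"] by linarith
  then show ?thesis by simp
qed

theorem lemma2p2:
  fixes f :: "real \<Rightarrow> real" and a x :: real and q p :: nat and L :: "real \<Rightarrow> real"
    and P :: "real set" and u v :: real
  assumes cont: "continuous_on {0..1} f"
    and maps: "f ` {0..1} \<subseteq> {0..1}"
    and fix_a: "a \<in> {0..1}" "f a = a"
    and uniq: "\<forall>y \<in> {0..1}. f y = y \<longrightarrow> y = a"
    and x01: "x \<in> {0..1}"
    and per: "periodic_pt f x q" and notfix: "q \<noteq> 1"
    and P_def: "P = orbit f x"
    and pair: "over_rotation_pair f P = (p, q)"
    and code: "is_code f a P L"
    and uv: "u \<in> P" "v \<in> P" "u \<noteq> v" "gt_at a u v" "L u = L v"
  shows "\<not> coprime p q"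
proof
  assume cop: "coprime p q"
  have q: "q > 0" "(f ^^ q) x = x" using per unfolding periodic_pt_def by auto
  have "finite P"
    using periodic_orbit_subset_image[OF q(2,1)] unfolding P_def
    by (rule finite_subset) simp
  then have x0: "Min P \<in> P" using uv(1) Min_in by blast
  have closed: "f ` P \<subseteq> P" unfolding P_def by (rule image_orbit_subset)
  have rho: "over_rotation_number f P = real p / real q"
    using pair unfolding over_rotation_number_def by simp
  have L0: "L (Min P) = 0" using code unfolding is_code_def by simp
  obtain i where i: "i < q" "u = (f ^^ i) (Min P)"
    using periodic_orbit_funpow_index[OF q(2,1)] x0 uv(1) unfolding P_def by blast
  obtain j where j: "j < q" "v = (f ^^ j) (Min P)"
    using periodic_orbit_funpow_index[OF q(2,1)] x0 uv(2) unfolding P_def by blast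
  obtain k1 :: int where "L u = real i * (real p / real q) - of_int k1"
    using code_funpow[OF code closed x0, of i] i(2) rho L0 by auto
  moreover obtain k2 :: int where "L v = real j * (real p / real q) - of_int k2"
    using code_funpow[OF code closed x0, of j] j(2) rho L0 by auto
  ultimately have "i = j"
    using coprime_multiples_distinct_mod_int[OF cop i(1) j(1)] uv(5) by metis
  then show False using i j uv(3) by simp
qed

end
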